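(* For all integers $n\geq0$, \[ \sum_{j=0}^n\binom{2j}{j}\binom{2(n-j)}{n-j}O_jO_{n-j}=4^{n-1}\sum_{j=1}^n\frac{H_{n-j}}{j}. \]
   Context: $H_n=\sum_{j=1}^n\frac1j$ ($H_0=0$) and $O_n=\sum_{j=1}^n\frac1{2j-1}$ ($O_0=0$). An empty sum is $0$. *)

theory Defs
  imports "HOL-Analysis.Analysis"
begin

definition oharm :: "nat \<Rightarrow> real" where
  "oharm n = (\<Sum>j=1..n. 1 / (2 * real j - 1))"

end

theory Submission
  imports Defs "HOL-Computational_Algebra.Formal_Power_Series"
begin

text \<open>
  Write p_j(a) = (a)_j / j!, the coefficient of x^j in (1 - x)^(-a), together with
  S_j(a) = sum_{k<j} 1/(a+k) and T_j(a) = sum_{k<j} 1/(a+k)^2, so that p_j' = p_j S_j and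
  S_j' = -T_j. Differentiating Vandermonde's identity sum_j p_j(a) p_{n-j}(b) = p_n(a+b)
  once in a and once in b gives
  sum_j p_j(a) S_j(a) p_{n-j}(b) S_{n-j}(b) = p_n(a+b) (S_n(a+b)^2 - T_n(a+b)).
  At a = b = 1/2 we have p_j(1/2) = binomial(2j,j) / 4^j and S_j(1/2) = 2 O_j, while on the
  right p_n(1) = 1, S_n(1) = H_n, and H_n^2 - T_n(1) = sum_j H_{n-j} / j by induction on n.
\<close>

definition rising_binomial :: "real \<Rightarrow> nat \<Rightarrow> real" where
  "rising_binomial a j = pochhammer a j / fact j"

definition shifted_harm :: "real \<Rightarrow> nat \<Rightarrow> real" where
  "shifted_harm a j = (\<Sum>k<j. 1 / (a + real k))"

definition shifted_harm2 :: "real \<Rightarrow> nat \<Rightarrow> real" where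
  "shifted_harm2 a j = (\<Sum>k<j. 1 / (a + real k)\<^sup>2)"

lemma rising_binomial_gchoose: "rising_binomial a j = (-1) ^ j * ((-a) gchoose j)"
  by (simp add: rising_binomial_def gbinomial_pochhammer)

lemma rising_binomial_Suc:
  "rising_binomial a (Suc j) = rising_binomial a j * ((a + real j) / (real j + 1))"
  by (simp add: rising_binomial_def pochhammer_Suc)

lemma rising_binomial_Vandermonde:
  "(\<Sum>j=0..n. rising_binomial a j * rising_binomial b (n - j)) = rising_binomial (a + b) n"
proof -
  have "(\<Sum>j=0..n. rising_binomial a j * rising_binomial b (n - j))
      = (-1) ^ n * (\<Sum>j=0..n. ((-a) gchoose j) * ((-b) gchoose (n - j)))"
    unfolding sum_distrib_left
  proof (rule sum.cong)
    fix j assume "j \<in> {0..n}"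
    then have "(-1::real) ^ j * (-1) ^ (n - j) = (-1) ^ n"
      by (simp flip: power_add)
    then show "rising_binomial a j * rising_binomial b (n - j)
        = (-1) ^ n * (((-a) gchoose j) * ((-b) gchoose (n - j)))"
      unfolding rising_binomial_gchoose by (metis mult.assoc mult.left_commute)
  qed simp
  also have "\<dots> = rising_binomial (a + b) n"
    by (simp add: gbinomial_Vandermonde rising_binomial_gchoose)
  finally show ?thesis .
qed

lemma has_real_derivative_rising_binomial:
  assumes "a > 0"
  shows "((\<lambda>x. rising_binomial x j) has_real_derivative
           rising_binomial a j * shifted_harm a j) (at a)"
proof (induction j)
  case 0
  show ?case by (simp add: rising_binomial_def shifted_harm_def)
next
  case (Suc j)
  have nonzero: "a + real j \<noteq> 0"
    using assms by simp
  have "((\<lambda>x. rising_binomial x j * ((x + real j) / (real j + 1))) has_real_derivative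
        rising_binomial a j * shifted_harm a j * ((a + real j) / (real j + 1))
          + rising_binomial a j * (1 / (real j + 1))) (at a)"
    by (rule derivative_eq_intros Suc | simp)+
  moreover have "rising_binomial a j * shifted_harm a j * ((a + real j) / (real j + 1))
        + rising_binomial a j * (1 / (real j + 1))
      = rising_binomial a (Suc j) * shifted_harm a (Suc j)"
    using nonzero by (simp add: rising_binomial_Suc shifted_harm_def divide_simps) (simp add: algebra_simps)
  ultimately show ?case
    by (simp add: rising_binomial_Suc)
qed

lemma has_real_derivative_shifted_harm:
  assumes "a > 0"
  shows "((\<lambda>x. shifted_harm x j) has_real_derivative - shifted_harm2 a j) (at a)"
proof -
  have "((\<lambda>x. \<Sum>k<j. 1 / (x + real k)) has_real_derivative (\<Sum>k<j. - 1 / (a + real k)\<^sup>2)) (at a)"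
  proof (rule DERIV_sum)
    fix k
    have "a + real k \<noteq> 0"
      using assms by simp
    then show "((\<lambda>x. 1 / (x + real k)) has_real_derivative - 1 / (a + real k)\<^sup>2) (at a)"
      by (auto intro!: derivative_eq_intros simp: power2_eq_square)
  qed
  then show ?thesis
    by (simp add: shifted_harm_def shifted_harm2_def sum_negf)
qed

lemma rising_binomial_Vandermonde_deriv:
  assumes "a > 0" "b > 0"
  shows "(\<Sum>j=0..n. rising_binomial a j * shifted_harm a j * rising_binomial b (n - j))
       = rising_binomial (a + b) n * shifted_harm (a + b) n"
proof -
  have "((\<lambda>x. \<Sum>j=0..n. rising_binomial x j * rising_binomial b (n - j)) has_real_derivative
        (\<Sum>j=0..n. rising_binomial a j * shifted_harm a j * rising_binomial b (n - j))) (at a)"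
    by (intro DERIV_sum DERIV_cmult_right has_real_derivative_rising_binomial assms)
  moreover have "((\<lambda>x. rising_binomial (x + b) n) has_real_derivative
        rising_binomial (a + b) n * shifted_harm (a + b) n) (at a)"
    using has_real_derivative_rising_binomial[of "a + b" n] assms by (simp add: DERIV_shift)
  ultimately show ?thesis
    unfolding rising_binomial_Vandermonde by (rule DERIV_unique)
qed

lemma rising_binomial_Vandermonde_deriv2:
  assumes "a > 0" "b > 0"
  shows "(\<Sum>j=0..n. rising_binomial a j * shifted_harm a j
                    * (rising_binomial b (n - j) * shifted_harm b (n - j)))
       = rising_binomial (a + b) n * ((shifted_harm (a + b) n)\<^sup>2 - shifted_harm2 (a + b) n)"
proof -
  let ?F = "\<lambda>x. \<Sum>j=0..n. rising_binomial a j * shifted_harm a j * rising_binomial x (n - j)"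
  have "(?F has_real_derivative
        (\<Sum>j=0..n. rising_binomial a j * shifted_harm a j
                   * (rising_binomial b (n - j) * shifted_harm b (n - j)))) (at b)"
    by (intro DERIV_sum DERIV_cmult has_real_derivative_rising_binomial assms)
  moreover have "((\<lambda>x. rising_binomial x n * shifted_harm x n) has_real_derivative
        rising_binomial (a + b) n * ((shifted_harm (a + b) n)\<^sup>2 - shifted_harm2 (a + b) n)) (at (b + a))"
    using DERIV_mult[OF has_real_derivative_rising_binomial has_real_derivative_shifted_harm] assms
    by (simp add: power2_eq_square algebra_simps)
  then have "((\<lambda>x. rising_binomial (x + a) n * shifted_harm (x + a) n) has_real_derivative
        rising_binomial (a + b) n * ((shifted_harm (a + b) n)\<^sup>2 - shifted_harm2 (a + b) n)) (at b)"
    by (simp only: DERIV_shift)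
  then have "(?F has_real_derivative
        rising_binomial (a + b) n * ((shifted_harm (a + b) n)\<^sup>2 - shifted_harm2 (a + b) n)) (at b)"
    by (rule has_field_derivative_transform_within_open[where S = "{0<..}"])
       (use assms rising_binomial_Vandermonde_deriv[of a] in \<open>auto simp: add.commute\<close>)
  ultimately show ?thesis
    by (rule DERIV_unique)
qed

lemma rising_binomial_half: "rising_binomial (1/2) j = real ((2 * j) choose j) / 4 ^ j"
proof -
  have "fact (2 * j) = (4::real) ^ j * pochhammer (1/2) j * fact j"
    using pochhammer_double[of "1/2 :: real" j]
    by (simp add: pochhammer_fact power_mult)
  moreover have "real ((2 * j) choose j) = fact (2 * j) / (fact j * fact j)"
    by (simp add: binomial_fact)
  ultimately show ?thesis
    by (simp add: rising_binomial_def)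
qed

lemma shifted_harm_half: "shifted_harm (1/2) j = 2 * oharm j"
proof (induction j)
  case 0
  show ?case by (simp add: shifted_harm_def oharm_def)
next
  case (Suc j)
  have "1 / (1/2 + real j) = 2 * (1 / (2 * real (Suc j) - 1))"
    by (simp add: field_simps)
  with Suc.IH show ?case
    by (simp add: shifted_harm_def oharm_def)
qed

lemma rising_binomial_one: "rising_binomial 1 n = 1"
  by (simp add: rising_binomial_def flip: pochhammer_fact)

lemma shifted_harm_one: "shifted_harm 1 n = harm n"
  by (simp add: shifted_harm_def harm_altdef field_simps inverse_eq_divide)

lemma sum_inverse_mult_complement:
  "(\<Sum>j=1..n. 1 / (real (Suc n - j) * real j)) = 2 * harm n / (real n + 1)"
proof -
  have "(\<Sum>j=1..n. 1 / (real (Suc n - j) * real j))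
      = (\<Sum>j=1..n. (1 / real (Suc n - j) + 1 / real j) / (real n + 1))"
  proof (rule sum.cong)
    fix j assume "j \<in> {1..n}"
    then have "real (Suc n - j) + real j = real n + 1" "real (Suc n - j) > 0" "real j > 0"
      by (auto simp: of_nat_diff)
    moreover have "1 / (m * i) = (1 / m + 1 / i) / (m + i)" if "m > 0" "i > 0" for m i :: real
    proof -
      from that have "1 / m + 1 / i = (m + i) / (m * i)"
        by (simp add: field_simps)
      with that show ?thesis
        by simp
    qed
    ultimately show "1 / (real (Suc n - j) * real j) = (1 / real (Suc n - j) + 1 / real j) / (real n + 1)"
      by metis
  qed simp
  also have "\<dots> = ((\<Sum>j=1..n. 1 / real (Suc n - j)) + (\<Sum>j=1..n. 1 / real j)) / (real n + 1)"
    by (simp only: sum.distrib[symmetric] sum_divide_distrib)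
  also have "(\<Sum>j=1..n. 1 / real (Suc n - j)) = (\<Sum>j=1..n. 1 / real j)"
    by (subst sum.atLeastAtMost_rev) (auto intro: sum.cong)
  finally show ?thesis
    by (simp add: harm_def inverse_eq_divide)
qed

lemma harm_convolution: "(\<Sum>j=1..n. harm (n - j) / real j) = (harm n)\<^sup>2 - shifted_harm2 1 n"
proof (induction n)
  case 0
  show ?case by (simp add: shifted_harm2_def harm_def)
next
  case (Suc n)
  have "(\<Sum>j=1..Suc n. harm (Suc n - j) / real j) = (\<Sum>j=1..n. harm (Suc n - j) / real j)"
    by (simp add: harm_def[of 0])
  also have "\<dots> = (\<Sum>j=1..n. harm (n - j) / real j + 1 / (real (Suc n - j) * real j))"
    by (rule sum.cong) (auto simp: Suc_diff_le harm_Suc add_divide_distrib inverse_eq_divide)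
  also have "\<dots> = (harm n)\<^sup>2 - shifted_harm2 1 n + 2 * harm n / (real n + 1)"
    by (simp only: sum.distrib Suc.IH sum_inverse_mult_complement)
  also have "\<dots> = (harm n + 1 / (real n + 1))\<^sup>2 - (shifted_harm2 1 n + 1 / (real n + 1)\<^sup>2)"
    by (simp add: power2_sum power_one_over)
  also have "\<dots> = (harm (Suc n))\<^sup>2 - shifted_harm2 1 (Suc n)"
    by (simp add: harm_Suc shifted_harm2_def inverse_eq_divide add.commute)
  finally show ?case .
qed

theorem corollary4:
  fixes n :: nat
  shows "(\<Sum>j=0..n. real ((2*j) choose j) * real ((2*(n-j)) choose (n-j)) * oharm j * oharm (n-j))
         = (4::real) powi (int n - 1) * (\<Sum>j=1..n. harm (n-j) / real j)"
proof -
  let ?c = "\<lambda>j. real ((2 * j) choose j)"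
  have summand_half: "rising_binomial (1/2) j * shifted_harm (1/2) j
        * (rising_binomial (1/2) (n - j) * shifted_harm (1/2) (n - j))
      = 4 / 4 ^ n * (?c j * ?c (n - j) * oharm j * oharm (n - j))" if "j \<in> {0..n}" for j
  proof -
    from that have "(4::real) ^ j * 4 ^ (n - j) = 4 ^ n"
      by (simp flip: power_add)
    then show ?thesis
      by (simp add: rising_binomial_half shifted_harm_half field_simps)
  qed
  have "4 / 4 ^ n * (\<Sum>j=0..n. ?c j * ?c (n - j) * oharm j * oharm (n - j))
      = (\<Sum>j=0..n. rising_binomial (1/2) j * shifted_harm (1/2) j
                   * (rising_binomial (1/2) (n - j) * shifted_harm (1/2) (n - j)))"
    by (simp add: sum_distrib_left summand_half)
  also have "\<dots> = (harm n)\<^sup>2 - shifted_harm2 1 n"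
    using rising_binomial_Vandermonde_deriv2[of "1/2" "1/2" n]
    by (simp add: rising_binomial_one shifted_harm_one)
  also have "\<dots> = (\<Sum>j=1..n. harm (n - j) / real j)"
    by (rule harm_convolution[symmetric])
  finally show ?thesis
    by (simp add: power_int_diff field_simps)
qed

end
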